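(* Consider two phases indexed by $\{1,2\}$ and a cell interface $x_{i+\frac12}$ separating a left cell $i$ and a right cell $i+1$. For $a,b\in\{1,2\}$ let $\mathcal{P}_{i+\frac12}[\Sigma_a,\Sigma_b]$ denote the probability of the event that phase $a$ is present immediately to the left of $x_{i+\frac12}$ and phase $b$ is present immediately to the right of $x_{i+\frac12}$ (exactly one phase is present on each side in every realization). Let $\alpha_j^p$, $p\in\{1,2\}$, $j\in\{i,i+1\}$, satisfy the saturation condition $\alpha_j^p\in[0,1]$, $\alpha_j^1+\alpha_j^2=1$, and assume that for every $p\neq q\in\{1,2\}$ $$\mathcal{P}_{i+\frac12}[\Sigma_p,\Sigma_p]+\mathcal{P}_{i+\frac12}[\Sigma_p,\Sigma_q]=\alpha_i^p,\qquad \mathcal{P}_{i+\frac12}[\Sigma_p,\Sigma_p]+\mathcal{P}_{i+\frac12}[\Sigma_q,\Sigma_p]=\alpha_{i+1}^p .$$ Then there exists $r\in[0,1]$, the same for $p=1$ and $p=2$, such that for every $p\neq q\in\{1,2\}$ $$\mathcal{P}_{i+\frac12}[\Sigma_p,\Sigma_p]=r\max(\alpha_i^p-\alpha_{i+1}^q,0)+(1-r)\min(\alpha_i^p,\alpha_{i+1}^p),$$ $$\mathcal{P}_{i+\frac12}[\Sigma_p,\Sigma_q]=r\min(\alpha_i^p,\alpha_{i+1}^q)+(1-r)\max(\alpha_i^p-\alpha_{i+1}^p,0).$$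
   Context: This arises in the Discrete Equation Method for two-phase flow: $\alpha_j^p$ is the (ensemble-averaged) volume fraction of phase $p$ in cell $j$, and the parameter $r$ may depend on the interface location and time but not on the phase index. The pair $(\min(\alpha_i^p,\alpha_{i+1}^p),\max(\alpha_i^p-\alpha_{i+1}^p,0))$ corresponds to stratified flow and $(\max(\alpha_i^p-\alpha_{i+1}^q,0),\min(\alpha_i^p,\alpha_{i+1}^q))$ to disperse flow. *)

theory Defs
  imports "HOL-Probability.Probability"
begin

text \<open>Phases are the naturals 1 and 2. In a realization w, L w is the phase present
immediately to the left of the interface and R w the phase immediately to the right.\<close>

definition Pint :: "'w measure \<Rightarrow> ('w \<Rightarrow> nat) \<Rightarrow> ('w \<Rightarrow> nat) \<Rightarrow> nat \<Rightarrow> nat \<Rightarrow> real" where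
  "Pint M L R a b = measure M {w \<in> space M. L w = a \<and> R w = b}"

end

theory Submission
  imports Defs
begin

text \<open>The joint law of the phases on the two sides of the interface is a 2\<times>2 table of
nonnegative entries with prescribed margins. It is determined by the entry
\<open>a = P[\<Sigma>\<^sub>1,\<Sigma>\<^sub>1]\<close>, which the Frechet bounds confine to the interval
\<open>[max (x + y - 1) 0, min x y]\<close>, where \<open>x\<close> and \<open>y\<close> are the volume fractions of phase 1
on the left and on the right. All entries are affine in \<open>a\<close>, so writing \<open>a\<close> as a convex
combination of the two endpoints expresses the whole table as the same convex combination
of the two extreme tables: the disperse one (\<open>a\<close> minimal) and the stratified one
(\<open>a\<close> maximal).\<close>

lemma convex_combination_of_bounds:
  fixes lo a hi :: "'a::linordered_field"
  assumes "lo \<le> a" "a \<le> hi"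
  obtains r where "r \<in> {0..1}" "a = r * lo + (1 - r) * hi"
proof
  define r where "r = (hi - a) / (hi - lo)"
    \<comment> \<open>if \<open>lo = hi\<close> this is \<open>0 / 0 = 0\<close>, which still works since then \<open>a = hi\<close>\<close>
  show "r \<in> {0..1}"
    using assms unfolding r_def by (auto simp: divide_le_eq_1)
  have "r * (hi - lo) = hi - a"
    using assms unfolding r_def by (cases "lo = hi") simp_all
  then show "a = r * lo + (1 - r) * hi"
    by (simp add: algebra_simps)
qed

lemma frechet_bounds_2x2:
  fixes a b c d x y :: real
  assumes "0 \<le> a" "0 \<le> b" "0 \<le> c" "0 \<le> d"
    and "a + b + c + d = 1" "a + b = x" "a + c = y"
  shows "max (x + y - 1) 0 \<le> a" "a \<le> min x y"
  using assms by auto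

lemma table_2x2_interpolates_extremes:
  fixes a b c d x x' y y' :: real
  assumes nonneg: "0 \<le> a" "0 \<le> b" "0 \<le> c" "0 \<le> d"
    and margins: "a + b = x" "a + c = y" "d + c = x'" "d + b = y'"
    and "x + x' = 1" "y + y' = 1"
  shows "\<exists>r\<in>{0..1::real}.
     a = r * max (x - y') 0 + (1 - r) * min x y \<and>
     b = r * min x y' + (1 - r) * max (x - y) 0 \<and>
     d = r * max (x' - y) 0 + (1 - r) * min x' y' \<and>
     c = r * min x' y + (1 - r) * max (x' - y') 0"
proof -
  define lo where "lo = max (x + y - 1) 0"
  define hi where "hi = min x y"
  have "a + b + c + d = 1"
    using assms by linarith
  then have "lo \<le> a" "a \<le> hi"
    unfolding lo_def hi_def using frechet_bounds_2x2[OF nonneg] margins(1,2) by auto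
  then obtain r where r: "r \<in> {0..1}" "a = r * lo + (1 - r) * hi"
    by (rule convex_combination_of_bounds)
  have complements: "x' = 1 - x" "y' = 1 - y"
    using assms by auto
  have extremes:
    "max (x - y') 0 = lo" "min x y = hi" "min x y' = x - lo" "max (x - y) 0 = x - hi"
    "max (x' - y) 0 = 1 - x - y + lo" "min x' y' = 1 - x - y + hi"
    "min x' y = y - lo" "max (x' - y') 0 = y - hi"
    unfolding complements lo_def hi_def by (auto simp: max_def min_def)
  have "b = x - a" "c = y - a" "d = 1 - x - y + a"
    using assms by auto
  with r show ?thesis
    unfolding extremes by (intro bexI[OF _ r(1)]) (simp add: algebra_simps)
qed

theorem theorem1:
  fixes M :: "'w measure" and L R :: "'w \<Rightarrow> nat"
    and aL aR :: "nat \<Rightarrow> real"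
  assumes "prob_space M"
    and "L \<in> measurable M (count_space UNIV)"
    and "R \<in> measurable M (count_space UNIV)"
    and "\<forall>w\<in>space M. L w \<in> {1,2} \<and> R w \<in> {1,2}"
    and "\<forall>p\<in>{1,2}. aL p \<in> {0..1} \<and> aR p \<in> {0..1}"
    and "aL 1 + aL 2 = 1" and "aR 1 + aR 2 = 1"
    and "\<forall>p\<in>{1,2}. \<forall>q\<in>{1,2}. p \<noteq> q \<longrightarrow>
           Pint M L R p p + Pint M L R p q = aL p \<and>
           Pint M L R p p + Pint M L R q p = aR p"
  shows "\<exists>r\<in>{0..1::real}. \<forall>p\<in>{1,2}. \<forall>q\<in>{1,2}. p \<noteq> q \<longrightarrow>
           Pint M L R p p = r * max (aL p - aR q) 0 + (1 - r) * min (aL p) (aR p) \<and>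
           Pint M L R p q = r * min (aL p) (aR q) + (1 - r) * max (aL p - aR p) 0"
proof -
  let ?P = "Pint M L R"
  have nonneg: "0 \<le> ?P p q" for p q
    by (simp add: Pint_def)
  have margins: "?P 1 1 + ?P 1 2 = aL 1" "?P 1 1 + ?P 2 1 = aR 1"
    "?P 2 2 + ?P 2 1 = aL 2" "?P 2 2 + ?P 1 2 = aR 2"
    using assms(8) by auto
  obtain r where "r \<in> {0..1}"
    "?P 1 1 = r * max (aL 1 - aR 2) 0 + (1 - r) * min (aL 1) (aR 1)"
    "?P 1 2 = r * min (aL 1) (aR 2) + (1 - r) * max (aL 1 - aR 1) 0"
    "?P 2 2 = r * max (aL 2 - aR 1) 0 + (1 - r) * min (aL 2) (aR 2)"
    "?P 2 1 = r * min (aL 2) (aR 1) + (1 - r) * max (aL 2 - aR 2) 0"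
    using table_2x2_interpolates_extremes[OF nonneg nonneg nonneg nonneg margins assms(6,7)]
    by blast
  then show ?thesis
    by (intro bexI[of _ r]) auto
qed

end
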